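(* Let $\alpha,\beta>-1$, $n\ge1$, and $d_{k,n}$ as defined below. For $0\le k\le n$: (i) if $\alpha>\beta$ and $\alpha+\beta\ge-1$, then $d_{k,n}>0$; (ii) if $\alpha<\beta$ and $\alpha+\beta\ge-1$, then $(-1)^{n-k}d_{k,n}>0$; (iii) if $\alpha=\beta>-\tfrac12$, then $d_{k,n}>0$ when $n-k$ is even and $d_{k,n}=0$ when $n-k$ is odd; if $\alpha=\beta=-\tfrac12$, then $d_{n,n}>0$ and $d_{k,n}=0$ for $k=1,\dots,n-1$.
   Context: For $\alpha,\beta>-1$ and $0\le k\le n$, $d_{k,n}=\frac{(n+\alpha+\beta+1)_k(k+\alpha+1)_{n-k}}{(n-k)!\,2^{2k}\Gamma(k+1)}\,{}_3F_2\!\left[\begin{matrix}k-n,\ n+k+\alpha+\beta+1,\ k+\frac12\\ k+\alpha+1,\ 2k+1\end{matrix};1\right]$, with $(a)_k$ the Pochhammer symbol and ${}_3F_2$ the generalized hypergeometric series. Equivalently, $P_n^{(\alpha,\beta)}(x)=d_{0,n}+2\sum_{k=1}^n d_{k,n}T_k(x)$, where $P_n^{(\alpha,\beta)}$ is the Jacobi polynomial and $T_k$ the Chebyshev polynomial of the first kind. *)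

theory Defs
  imports "HOL-Analysis.Analysis"
begin

definition hyp3F2 :: "real \<Rightarrow> real \<Rightarrow> real \<Rightarrow> real \<Rightarrow> real \<Rightarrow> real \<Rightarrow> real" where
  "hyp3F2 a1 a2 a3 b1 b2 z =
     (\<Sum>j. pochhammer a1 j * pochhammer a2 j * pochhammer a3 j
           / (pochhammer b1 j * pochhammer b2 j * fact j) * z ^ j)"

text \<open>Chebyshev coefficient d_{k,n} of the Jacobi polynomial P_n^{(alpha,beta)}.\<close>
definition dcoef :: "real \<Rightarrow> real \<Rightarrow> nat \<Rightarrow> nat \<Rightarrow> real" where
  "dcoef \<alpha> \<beta> k n =
     pochhammer (real n + \<alpha> + \<beta> + 1) k * pochhammer (real k + \<alpha> + 1) (n - k)
     / (fact (n - k) * 2 ^ (2 * k) * Gamma (real k + 1))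
     * hyp3F2 (real k - real n) (real n + real k + \<alpha> + \<beta> + 1) (real k + 1 / 2)
              (real k + \<alpha> + 1) (2 * real k + 1) 1"

end

theory Submission
  imports Defs
begin

text \<open>Expanding the terminating \<open>\<^sub>3F\<^sub>2\<close> writes \<open>d\<^sub>k = d\<^sub>k\<^sub>,\<^sub>n\<close> as a finite alternating sum,
and a creative-telescoping certificate turns it into the three-term recurrence
  \<open>(n-k)(n+k+\<alpha>+\<beta>+1) d\<^sub>k = 2(\<alpha>-\<beta>)(k+1) d\<^sub>k\<^sub>+\<^sub>1 + (n+k+2)(n-k+\<alpha>+\<beta>-1) d\<^sub>k\<^sub>+\<^sub>2\<close>,
with \<open>d\<^sub>n > 0\<close> and \<open>d\<^sub>n\<^sub>+\<^sub>1 = 0\<close>. The coefficient on the left is positive for \<open>k < n\<close>, so signs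
propagate downwards from \<open>k = n\<close>. For \<open>\<alpha> > \<beta>\<close>, \<open>\<alpha>+\<beta> \<ge> -1\<close> both coefficients on the right are
nonnegative and the middle one positive; \<open>\<alpha> < \<beta>\<close> reduces to this case via \<open>(-1)\<^sup>n\<^sup>+\<^sup>k d\<^sub>k\<close>. For
\<open>\<alpha> = \<beta>\<close> the middle term vanishes and the two parities decouple, and for \<open>\<alpha> = \<beta> = -1/2\<close> the last
coefficient also vanishes at \<open>k = n-2\<close>, which kills every \<open>d\<^sub>k\<close> with \<open>k < n\<close>.\<close>

lemma pochhammer_minus_of_nat:
  assumes "j \<le> m"
  shows "pochhammer (- real m) j = (-1)^j * fact m / fact (m - j)"
proof -
  have "fact m = (pochhammer 1 (m - j) :: real) * pochhammer (1 + real (m - j)) j"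
    using pochhammer_product[of "m - j" m "1::real"] assms by (simp add: pochhammer_fact)
  hence "fact m = fact (m - j) * (pochhammer (real m - real j + 1) j :: real)"
    using assms by (simp add: pochhammer_fact of_nat_diff add.commute)
  thus ?thesis
    by (simp add: pochhammer_minus)
qed

lemma fact_add_eq_fact_mult_pochhammer:
  "fact (a + j) = (fact a :: real) * pochhammer (real a + 1) j"
  using pochhammer_product'[of 1 a j] by (simp add: pochhammer_fact add.commute)

lemma hyp3F2_terminating:
  "hyp3F2 (- real m) b c d e z =
    (\<Sum>j\<le>m. pochhammer (- real m) j * pochhammer b j * pochhammer c j
           / (pochhammer d j * pochhammer e j * fact j) * z ^ j)"
  unfolding hyp3F2_def
  by (rule suminf_finite) (auto simp: pochhammer_of_nat_eq_0_iff)

lemma sum_lessThan_drop_zeros: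
  fixes f :: "nat \<Rightarrow> 'a::comm_monoid_add"
  assumes "\<And>r. r < p \<Longrightarrow> f r = 0"
  shows "(\<Sum>r<N. f r) = (\<Sum>j<N - p. f (j + p))"
  using assms
proof (induction p arbitrary: f N)
  case (Suc p)
  show ?case
  proof (cases N)
    case (Suc N')
    have "(\<Sum>r<N. f r) = (\<Sum>r<N'. f (Suc r))"
      using Suc.prems[of 0] unfolding Suc sum.lessThan_Suc_shift by simp
    also have "\<dots> = (\<Sum>j<N' - p. f (Suc (j + p)))"
      using Suc.IH[of "\<lambda>r. f (Suc r)"] Suc.prems by simp
    finally show ?thesis by (simp add: Suc)
  qed simp
qed simp

lemma sum_atMost_eq_0_telescoping:
  fixes G H :: "nat \<Rightarrow> 'a::ab_group_add"
  assumes "\<And>r. r < m \<Longrightarrow> H r = - G (Suc r)" "H m = 0" "G 0 = 0"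
  shows "(\<Sum>r\<le>m. H r + G r) = 0"
proof -
  have "(\<Sum>r\<le>m. H r) = - (\<Sum>r<m. G (Suc r))"
    using assms(1,2) by (simp add: lessThan_Suc_atMost[symmetric] sum_negf)
  moreover have "(\<Sum>r\<le>m. G r) = (\<Sum>r<m. G (Suc r))"
  proof (cases m)
    case (Suc m')
    show ?thesis unfolding Suc sum.atMost_Suc_shift using assms(3) by (simp add: lessThan_Suc_atMost)
  qed (simp add: assms(3))
  ultimately show ?thesis by (simp add: sum.distrib)
qed

lemma three_term_backward_pos:
  fixes D a b c :: "nat \<Rightarrow> real"
  assumes rec: "\<And>k. k < n \<Longrightarrow> a k * D k = b k * D (Suc k) + c k * D (Suc (Suc k))"
    and a: "\<And>k. k < n \<Longrightarrow> a k > 0"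
    and b: "\<And>k. k < n \<Longrightarrow> b k > 0"
    and c: "\<And>k. Suc k < n \<Longrightarrow> c k \<ge> 0"
    and top: "D n > 0" "D (Suc n) = 0"
    and "k \<le> n"
  shows "D k > 0"
  using \<open>k \<le> n\<close>
proof (induction k rule: nat_descend_induct[where n = n])
  case (descend k)
  show ?case
  proof (cases "k = n")
    case False
    with descend.prems have "k < n" by simp
    have "D (Suc k) > 0" using descend.IH \<open>k < n\<close> by simp
    moreover have "c k * D (Suc (Suc k)) \<ge> 0"
    proof (cases "Suc k < n")
      case True
      thus ?thesis using descend.IH c[OF True] by (simp add: less_imp_le)
    next
      case False
      with \<open>k < n\<close> have "Suc k = n" by simp
      thus ?thesis using top by simp
    qed
    ultimately have "a k * D k > 0"
      using rec[OF \<open>k < n\<close>] b[OF \<open>k < n\<close>] by (simp add: add_pos_nonneg)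
    thus ?thesis using a[OF \<open>k < n\<close>] by (simp add: zero_less_mult_iff)
  qed (use top in simp)
qed simp

lemma three_term_backward_parity:
  fixes D a c :: "nat \<Rightarrow> real"
  assumes rec: "\<And>k. k < n \<Longrightarrow> a k * D k = c k * D (Suc (Suc k))"
    and a: "\<And>k. k < n \<Longrightarrow> a k > 0"
    and c: "\<And>k. Suc k < n \<Longrightarrow> c k > 0"
    and top: "D n > 0" "D (Suc n) = 0"
    and "k \<le> n"
  shows "(even (n - k) \<longrightarrow> D k > 0) \<and> (odd (n - k) \<longrightarrow> D k = 0)"
  using \<open>k \<le> n\<close>
proof (induction k rule: nat_descend_induct[where n = n])
  case (descend k)
  show ?case
  proof (cases "k = n")
    case False
    with descend.prems have "k < n" by simp
    define q where "q = c k / a k"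
    have q: "D k = q * D (Suc (Suc k))" "Suc k < n \<Longrightarrow> q > 0"
      using rec[OF \<open>k < n\<close>] a[OF \<open>k < n\<close>] c unfolding q_def by (simp_all add: field_simps)
    show ?thesis
    proof (cases "Suc k < n")
      case True
      hence "n - k = Suc (Suc (n - Suc (Suc k)))" by simp
      hence "even (n - k) = even (n - Suc (Suc k))" by simp
      thus ?thesis
        using descend.IH[of "Suc (Suc k)"] True q by (auto intro: mult_pos_pos)
    next
      case False
      with \<open>k < n\<close> have "n - k = 1" "Suc (Suc k) = Suc n" by simp_all
      thus ?thesis using top q by simp
    qed
  qed (use top in simp)
qed simp

lemma three_term_backward_zero:
  fixes D a c :: "nat \<Rightarrow> real"
  assumes rec: "\<And>k. k < n \<Longrightarrow> a k * D k = c k * D (Suc (Suc k))"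
    and a: "\<And>k. k < n \<Longrightarrow> a k > 0"
    and c: "\<And>k. Suc (Suc k) = n \<Longrightarrow> c k = 0"
    and top: "D (Suc n) = 0"
    and "k < n"
  shows "D k = 0"
  using \<open>k < n\<close>
proof (induction k rule: nat_descend_induct[where n = n])
  case (descend k)
  have "c k * D (Suc (Suc k)) = 0"
  proof (cases "Suc (Suc k)" n rule: linorder_cases)
    case less
    thus ?thesis using descend.IH by simp
  next
    case greater
    with descend.prems have "Suc (Suc k) = Suc n" by simp
    thus ?thesis using top by simp
  qed (simp add: c)
  hence "a k * D k = 0" using rec[OF descend.prems] by simp
  thus ?case using a[OF descend.prems] by simp
qed simp

definition jacobi_cheb_term :: "real \<Rightarrow> real \<Rightarrow> nat \<Rightarrow> nat \<Rightarrow> real" where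
  "jacobi_cheb_term \<alpha> \<beta> n i =
     pochhammer (real n + \<alpha> + \<beta> + 1) i * pochhammer (real i + \<alpha> + 1) (n - i)
     * pochhammer (1/2) i / fact (n - i)"

text \<open>The range \<open>j < Suc n - k\<close> is empty for \<open>k > n\<close>, so the sum vanishes there; this way the
  three-term recurrence below holds for every \<open>k\<close>, with \<open>d\<^sub>n\<^sub>+\<^sub>1 = 0\<close> built in.\<close>

definition jacobi_cheb_sum :: "real \<Rightarrow> real \<Rightarrow> nat \<Rightarrow> nat \<Rightarrow> real" where
  "jacobi_cheb_sum \<alpha> \<beta> n k =
     (\<Sum>j<Suc n - k. (-1)^j * jacobi_cheb_term \<alpha> \<beta> n (k + j) / (fact (2*k + j) * fact j))"

lemma dcoef_eq_jacobi_cheb_sum: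
  assumes "k \<le> n" "\<alpha> > -1"
  shows "dcoef \<alpha> \<beta> k n = jacobi_cheb_sum \<alpha> \<beta> n k"
proof -
  define m where "m = n - k"
  have nm: "n = k + m" using assms m_def by simp
  have "dcoef \<alpha> \<beta> k n = (\<Sum>j\<le>m.
     pochhammer (real n + \<alpha> + \<beta> + 1) k * pochhammer (real k + \<alpha> + 1) m
     / (fact m * 2 ^ (2 * k) * fact k) *
     (pochhammer (- real m) j * pochhammer (real n + real k + \<alpha> + \<beta> + 1) j
      * pochhammer (real k + 1 / 2) j
      / (pochhammer (real k + \<alpha> + 1) j * pochhammer (2 * real k + 1) j * fact j)))"
  proof -
    have "real k - real n = - real m" using assms by (simp add: m_def of_nat_diff)
    moreover have "Gamma (real k + 1) = fact k" using Gamma_fact[of k] by (simp add: add.commute)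
    ultimately show ?thesis
      unfolding dcoef_def m_def[symmetric] by (simp add: hyp3F2_terminating sum_distrib_left)
  qed
  also have "\<dots> = (\<Sum>j\<le>m. (-1)^j * jacobi_cheb_term \<alpha> \<beta> n (k + j) / (fact (2*k + j) * fact j))"
  proof (rule sum.cong[OF refl])
    fix j assume "j \<in> {..m}"
    hence jm: "j \<le> m" by simp
    have p1: "pochhammer (real n + \<alpha> + \<beta> + 1) (k + j)
        = pochhammer (real n + \<alpha> + \<beta> + 1) k * pochhammer (real n + real k + \<alpha> + \<beta> + 1) j"
      using pochhammer_product'[of "real n + \<alpha> + \<beta> + 1" k j] by (simp add: add_ac)
    have p2: "pochhammer (real k + \<alpha> + 1) m
        = pochhammer (real k + \<alpha> + 1) j * pochhammer (real (k + j) + \<alpha> + 1) (n - (k + j))"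
      using pochhammer_product[OF jm, of "real k + \<alpha> + 1"] by (simp add: nm add_ac)
    have p3: "pochhammer (1/2::real) (k + j) = pochhammer (1/2) k * pochhammer (real k + 1/2) j"
      using pochhammer_product'[of "1/2::real" k j] by (simp add: add_ac)
    have p4: "fact (2*k + j) = (2 ^ (2 * k) * pochhammer (1 / 2) k * fact k :: real)
                                * pochhammer (2 * real k + 1) j"
      using fact_add_eq_fact_mult_pochhammer[of "2*k" j] by (simp add: fact_double)
    have "n - (k + j) = m - j" using nm by simp
    moreover have "pochhammer (real k + \<alpha> + 1) j > 0" using assms by (intro pochhammer_pos) simp
    moreover have "pochhammer (1/2::real) k > 0" by (intro pochhammer_pos) simp
    moreover have "pochhammer (2 * real k + 1) j > 0" by (intro pochhammer_pos) simp
    ultimately show "pochhammer (real n + \<alpha> + \<beta> + 1) k * pochhammer (real k + \<alpha> + 1) m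
       / (fact m * 2 ^ (2 * k) * fact k) *
       (pochhammer (- real m) j * pochhammer (real n + real k + \<alpha> + \<beta> + 1) j
        * pochhammer (real k + 1 / 2) j
        / (pochhammer (real k + \<alpha> + 1) j * pochhammer (2 * real k + 1) j * fact j))
       = (-1)^j * jacobi_cheb_term \<alpha> \<beta> n (k + j) / (fact (2*k + j) * fact j)"
      unfolding jacobi_cheb_term_def p1 p2 p3 p4 pochhammer_minus_of_nat[OF jm]
      by (simp add: field_simps)
  qed
  finally show ?thesis
    using assms by (simp add: jacobi_cheb_sum_def m_def Suc_diff_le lessThan_Suc_atMost)
qed

lemma jacobi_cheb_term_Suc:
  assumes "i < n"
  shows "jacobi_cheb_term \<alpha> \<beta> n (Suc i) * (real i + \<alpha> + 1)
       = jacobi_cheb_term \<alpha> \<beta> n i * (real n + \<alpha> + \<beta> + 1 + real i) * (real i + 1/2) * (real n - real i)"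
proof -
  obtain d where d: "n - i = Suc d" using assms by (metis Suc_diff_Suc)
  hence "n - Suc i = d" "real n - real i = real (Suc d)"
    using assms by (simp_all add: of_nat_diff[symmetric])
  moreover have "pochhammer (real i + \<alpha> + 1) (Suc d) = (real i + \<alpha> + 1) * pochhammer (real (Suc i) + \<alpha> + 1) d"
    by (simp add: pochhammer_rec add_ac)
  ultimately show ?thesis
    unfolding jacobi_cheb_term_def d by (simp add: pochhammer_Suc)
qed

text \<open>With the common denominator \<open>(2k+2+r)! r!\<close> the sums for \<open>d\<^sub>k\<close>, \<open>d\<^sub>k\<^sub>+\<^sub>1\<close> and \<open>d\<^sub>k\<^sub>+\<^sub>2\<close>
  become weighted sums over one index range.\<close>

definition jacobi_cheb_weight :: "real \<Rightarrow> real \<Rightarrow> nat \<Rightarrow> nat \<Rightarrow> nat \<Rightarrow> real" where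
  "jacobi_cheb_weight \<alpha> \<beta> n k r =
     (-1)^r * jacobi_cheb_term \<alpha> \<beta> n (k + r) / (fact (2*k + 2 + r) * fact r)"

lemma jacobi_cheb_sum_eq_weighted:
  "jacobi_cheb_sum \<alpha> \<beta> n k = (\<Sum>r<Suc n - k.
     jacobi_cheb_weight \<alpha> \<beta> n k r * ((2 * real k + 2 + real r) * (2 * real k + 1 + real r)))"
  unfolding jacobi_cheb_sum_def
proof (rule sum.cong[OF refl])
  fix r :: nat
  define X where "X = (2 * real k + 2 + real r) * (2 * real k + 1 + real r)"
  define Y where "Y = (fact (2 * k + r) * fact r :: real)"
  have fact_eq: "fact (2*k + 2 + r) * fact r = X * Y"
    unfolding X_def Y_def by (simp add: numeral_2_eq_2 algebra_simps)
  have "X \<noteq> 0" "Y \<noteq> 0" unfolding X_def Y_def by (simp_all add: add_pos_nonneg)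
  then show "(-1)^r * jacobi_cheb_term \<alpha> \<beta> n (k + r) / (fact (2*k + r) * fact r) =
     jacobi_cheb_weight \<alpha> \<beta> n k r * ((2 * real k + 2 + real r) * (2 * real k + 1 + real r))"
    unfolding jacobi_cheb_weight_def fact_eq X_def[symmetric] Y_def[symmetric] by (simp add: field_simps)
qed

lemma jacobi_cheb_sum_Suc_eq_weighted:
  "jacobi_cheb_sum \<alpha> \<beta> n (Suc k) = - (\<Sum>r<Suc n - k.
     jacobi_cheb_weight \<alpha> \<beta> n k r * ((2 * real k + 2 + real r) * real r))"
proof -
  have "(\<Sum>r<Suc n - k. jacobi_cheb_weight \<alpha> \<beta> n k r * ((2 * real k + 2 + real r) * real r))
      = (\<Sum>j<Suc n - Suc k. jacobi_cheb_weight \<alpha> \<beta> n k (Suc j)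
                             * ((2 * real k + 3 + real j) * (real j + 1)))"
    by (subst sum_lessThan_drop_zeros[where p = 1]) (simp_all add: algebra_simps)
  also have "\<dots> = - jacobi_cheb_sum \<alpha> \<beta> n (Suc k)"
    unfolding jacobi_cheb_sum_def sum_negf[symmetric]
  proof (rule sum.cong[OF refl])
    fix j :: nat
    define X where "X = (2 * real k + 3 + real j) * (real j + 1)"
    define Y where "Y = (fact (2 * Suc k + j) * fact j :: real)"
    have fact_eq: "fact (2*k + 2 + Suc j) * fact (Suc j) = X * Y"
      unfolding X_def Y_def by (simp add: algebra_simps)
    have "X \<noteq> 0" "Y \<noteq> 0" unfolding X_def Y_def by (simp_all add: add_pos_nonneg)
    then show "jacobi_cheb_weight \<alpha> \<beta> n k (Suc j) * ((2 * real k + 3 + real j) * (real j + 1))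
        = - ((-1)^j * jacobi_cheb_term \<alpha> \<beta> n (Suc k + j) / (fact (2 * Suc k + j) * fact j))"
      unfolding jacobi_cheb_weight_def fact_eq X_def[symmetric] Y_def[symmetric] by (simp add: field_simps)
  qed
  finally show ?thesis by simp
qed

lemma jacobi_cheb_sum_Suc_Suc_eq_weighted:
  "jacobi_cheb_sum \<alpha> \<beta> n (Suc (Suc k)) = (\<Sum>r<Suc n - k.
     jacobi_cheb_weight \<alpha> \<beta> n k r * (real r * (real r - 1)))"
proof -
  have "(\<Sum>r<Suc n - k. jacobi_cheb_weight \<alpha> \<beta> n k r * (real r * (real r - 1)))
      = (\<Sum>j<Suc n - Suc (Suc k). jacobi_cheb_weight \<alpha> \<beta> n k (Suc (Suc j))
                                   * ((real j + 2) * (real j + 1)))"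
    by (subst sum_lessThan_drop_zeros[where p = 2])
       (auto simp: less_2_cases_iff numeral_2_eq_2 algebra_simps)
  also have "\<dots> = jacobi_cheb_sum \<alpha> \<beta> n (Suc (Suc k))"
    unfolding jacobi_cheb_sum_def
  proof (rule sum.cong[OF refl])
    fix j :: nat
    define X where "X = (real j + 2) * (real j + 1)"
    define Y where "Y = (fact (2 * Suc (Suc k) + j) * fact j :: real)"
    have fact_eq: "fact (2*k + 2 + Suc (Suc j)) * fact (Suc (Suc j)) = X * Y"
      unfolding X_def Y_def by (simp add: algebra_simps)
    have "X \<noteq> 0" "Y \<noteq> 0" unfolding X_def Y_def by (simp_all add: add_pos_nonneg)
    then show "jacobi_cheb_weight \<alpha> \<beta> n k (Suc (Suc j)) * ((real j + 2) * (real j + 1))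
        = (-1)^j * jacobi_cheb_term \<alpha> \<beta> n (Suc (Suc k) + j) / (fact (2 * Suc (Suc k) + j) * fact j)"
      unfolding jacobi_cheb_weight_def fact_eq X_def[symmetric] Y_def[symmetric] by (simp add: field_simps)
  qed
  finally show ?thesis by simp
qed

lemma jacobi_cheb_weight_Suc:
  assumes "k + r < n"
  shows "jacobi_cheb_weight \<alpha> \<beta> n k (Suc r)
           * ((real (k + r) + \<alpha> + 1) * ((2 * real k + 3 + real r) * (real r + 1)))
       = - jacobi_cheb_weight \<alpha> \<beta> n k r
           * ((real n + \<alpha> + \<beta> + 1 + real (k + r)) * (real (k + r) + 1/2) * (real n - real (k + r)))"
proof -
  define X where "X = (2 * real k + 3 + real r) * (real r + 1)"
  define Y where "Y = (fact (2*k + 2 + r) * fact r :: real)"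
  have fact_eq: "fact (2*k + 2 + Suc r) * fact (Suc r) = X * Y"
    unfolding X_def Y_def by (simp add: algebra_simps)
  have "X \<noteq> 0" "Y \<noteq> 0" unfolding X_def Y_def by (simp_all add: add_pos_nonneg)
  hence "jacobi_cheb_weight \<alpha> \<beta> n k (Suc r) * ((real (k + r) + \<alpha> + 1) * X)
      = - ((-1)^r * (jacobi_cheb_term \<alpha> \<beta> n (Suc (k + r)) * (real (k + r) + \<alpha> + 1)) / Y)"
    unfolding jacobi_cheb_weight_def fact_eq by (simp add: field_simps)
  also have "\<dots> = - jacobi_cheb_weight \<alpha> \<beta> n k r
      * ((real n + \<alpha> + \<beta> + 1 + real (k + r)) * (real (k + r) + 1/2) * (real n - real (k + r)))"
    unfolding jacobi_cheb_term_Suc[OF assms] jacobi_cheb_weight_def Y_def by (simp add: field_simps)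
  finally show ?thesis unfolding X_def .
qed

lemma jacobi_cheb_weight_telescoping:
  "(\<Sum>r<Suc n - k. jacobi_cheb_weight \<alpha> \<beta> n k r *
      ((real n + \<alpha> + \<beta> + 1 + real (k + r)) * (real (k + r) + 1/2) * (real n - real (k + r)))
       + jacobi_cheb_weight \<alpha> \<beta> n k r * ((real (k + r) + \<alpha>) * ((2 * real k + 2 + real r) * real r))) = 0"
proof (cases "k \<le> n")
  case True
  hence range: "Suc n - k = Suc (n - k)" by simp
  show ?thesis
    unfolding range lessThan_Suc_atMost
  proof (intro sum_atMost_eq_0_telescoping)
    fix r assume "r < n - k"
    hence "k + r < n" by simp
    have "(real (k + Suc r) + \<alpha>) * ((2 * real k + 2 + real (Suc r)) * real (Suc r))
        = (real (k + r) + \<alpha> + 1) * ((2 * real k + 3 + real r) * (real r + 1))"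
      by (simp add: algebra_simps)
    then show "jacobi_cheb_weight \<alpha> \<beta> n k r
        * ((real n + \<alpha> + \<beta> + 1 + real (k + r)) * (real (k + r) + 1/2) * (real n - real (k + r)))
      = - (jacobi_cheb_weight \<alpha> \<beta> n k (Suc r)
        * ((real (k + Suc r) + \<alpha>) * ((2 * real k + 2 + real (Suc r)) * real (Suc r))))"
      using jacobi_cheb_weight_Suc[OF \<open>k + r < n\<close>, where \<alpha> = \<alpha> and \<beta> = \<beta>] by simp
  qed (use True in simp_all)
qed simp

lemma jacobi_cheb_sum_three_term:
  "(real n - real k) * (real n + real k + \<alpha> + \<beta> + 1) * jacobi_cheb_sum \<alpha> \<beta> n k
   = 2 * (\<alpha> - \<beta>) * (real k + 1) * jacobi_cheb_sum \<alpha> \<beta> n (Suc k)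
     + (real n + real k + 2) * (real n - real k + \<alpha> + \<beta> - 1) * jacobi_cheb_sum \<alpha> \<beta> n (Suc (Suc k))"
proof -
  define W where "W = jacobi_cheb_weight \<alpha> \<beta> n k"
  define A where "A = (real n - real k) * (real n + real k + \<alpha> + \<beta> + 1)"
  define B where "B = 2 * (\<alpha> - \<beta>) * (real k + 1)"
  define C where "C = (real n + real k + 2) * (real n - real k + \<alpha> + \<beta> - 1)"
  have "A * jacobi_cheb_sum \<alpha> \<beta> n k - B * jacobi_cheb_sum \<alpha> \<beta> n (Suc k)
          - C * jacobi_cheb_sum \<alpha> \<beta> n (Suc (Suc k))
      = (\<Sum>r<Suc n - k. W r * (A * ((2 * real k + 2 + real r) * (2 * real k + 1 + real r))
          + B * ((2 * real k + 2 + real r) * real r) - C * (real r * (real r - 1))))"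
    unfolding jacobi_cheb_sum_eq_weighted[of \<alpha> \<beta> n k] jacobi_cheb_sum_Suc_eq_weighted[of \<alpha> \<beta> n k]
      jacobi_cheb_sum_Suc_Suc_eq_weighted[of \<alpha> \<beta> n k] W_def
    by (simp add: sum_distrib_left sum.distrib sum_subtractf algebra_simps)
  also have "\<dots> = 4 * (real k + 1) * (\<Sum>r<Suc n - k. W r *
      ((real n + \<alpha> + \<beta> + 1 + real (k + r)) * (real (k + r) + 1/2) * (real n - real (k + r)))
       + W r * ((real (k + r) + \<alpha>) * ((2 * real k + 2 + real r) * real r)))"
    unfolding sum_distrib_left A_def B_def C_def by (rule sum.cong) (simp_all add: field_simps)
  also have "\<dots> = 0"
    unfolding W_def jacobi_cheb_weight_telescoping by simp
  finally show ?thesis unfolding A_def B_def C_def by simp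
qed

lemma jacobi_cheb_sum_top_pos:
  assumes "\<alpha> + \<beta> > -2"
  shows "jacobi_cheb_sum \<alpha> \<beta> n n > 0"
proof -
  have "pochhammer (real n + \<alpha> + \<beta> + 1) n > 0"
    using assms by (cases n) (simp_all add: pochhammer_pos)
  moreover have "pochhammer (1/2::real) n > 0" by (rule pochhammer_pos) simp
  ultimately show ?thesis unfolding jacobi_cheb_sum_def jacobi_cheb_term_def by simp
qed

lemma jacobi_cheb_sum_eq_0:
  "n < k \<Longrightarrow> jacobi_cheb_sum \<alpha> \<beta> n k = 0"
  by (simp add: jacobi_cheb_sum_def)

lemma jacobi_cheb_three_term_lead_pos:
  assumes "\<alpha> + \<beta> > -2" "k < n"
  shows "(real n - real k) * (real n + real k + \<alpha> + \<beta> + 1) > 0"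
  using assms by (intro mult_pos_pos) simp_all

lemma jacobi_cheb_sum_pos:
  assumes "\<alpha> > \<beta>" "\<alpha> + \<beta> \<ge> -1" "k \<le> n"
  shows "jacobi_cheb_sum \<alpha> \<beta> n k > 0"
  using jacobi_cheb_sum_three_term
proof (rule three_term_backward_pos)
  show "(real n - real j) * (real n + real j + \<alpha> + \<beta> + 1) > 0" if "j < n" for j
    using assms that by (intro jacobi_cheb_three_term_lead_pos) simp_all
  show "2 * (\<alpha> - \<beta>) * (real j + 1) > 0" for j
    using assms by simp
  show "(real n + real j + 2) * (real n - real j + \<alpha> + \<beta> - 1) \<ge> 0" if "Suc j < n" for j
    using assms that by simp
  show "jacobi_cheb_sum \<alpha> \<beta> n n > 0"
    using assms by (intro jacobi_cheb_sum_top_pos) simp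
qed (simp_all add: assms jacobi_cheb_sum_eq_0)

lemma jacobi_cheb_sum_alternating:
  assumes "\<alpha> < \<beta>" "\<alpha> + \<beta> \<ge> -1" "k \<le> n"
  shows "(-1) ^ (n - k) * jacobi_cheb_sum \<alpha> \<beta> n k > 0"
proof -
  define E where "E j = (-1) ^ (n + j) * jacobi_cheb_sum \<alpha> \<beta> n j" for j
  have "E k > 0"
  proof (rule three_term_backward_pos[where D = E and b = "\<lambda>j. 2 * (\<beta> - \<alpha>) * (real j + 1)"])
    show "(real n - real j) * (real n + real j + \<alpha> + \<beta> + 1) * E j
        = 2 * (\<beta> - \<alpha>) * (real j + 1) * E (Suc j)
          + (real n + real j + 2) * (real n - real j + \<alpha> + \<beta> - 1) * E (Suc (Suc j))" for j
    proof -
      have "(real n - real j) * (real n + real j + \<alpha> + \<beta> + 1) * E j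
          = (-1) ^ (n + j) * ((real n - real j) * (real n + real j + \<alpha> + \<beta> + 1)
                                * jacobi_cheb_sum \<alpha> \<beta> n j)"
        by (simp add: E_def)
      also have "\<dots> = (-1) ^ (n + j) * (2 * (\<alpha> - \<beta>) * (real j + 1) * jacobi_cheb_sum \<alpha> \<beta> n (Suc j)
          + (real n + real j + 2) * (real n - real j + \<alpha> + \<beta> - 1)
            * jacobi_cheb_sum \<alpha> \<beta> n (Suc (Suc j)))"
        by (simp only: jacobi_cheb_sum_three_term)
      also have "\<dots> = 2 * (\<beta> - \<alpha>) * (real j + 1) * E (Suc j)
          + (real n + real j + 2) * (real n - real j + \<alpha> + \<beta> - 1) * E (Suc (Suc j))"
        by (simp add: E_def algebra_simps)
      finally show ?thesis .
    qed
    show "(real n - real j) * (real n + real j + \<alpha> + \<beta> + 1) > 0" if "j < n" for j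
      using assms that by (intro jacobi_cheb_three_term_lead_pos) simp_all
    show "2 * (\<beta> - \<alpha>) * (real j + 1) > 0" for j
      using assms by simp
    show "(real n + real j + 2) * (real n - real j + \<alpha> + \<beta> - 1) \<ge> 0" if "Suc j < n" for j
      using assms that by simp
    show "E n > 0"
      using assms jacobi_cheb_sum_top_pos[of \<alpha> \<beta> n] by (simp add: E_def)
  qed (simp_all add: assms E_def jacobi_cheb_sum_eq_0)
  moreover have "(-1::real) ^ (n + k) = (-1) ^ (n - k)"
  proof -
    have "n + k = (n - k) + 2 * k" using \<open>k \<le> n\<close> by simp
    thus ?thesis by (simp only: power_add power_mult) simp
  qed
  ultimately show ?thesis unfolding E_def by simp
qed

lemma jacobi_cheb_sum_symmetric:
  assumes "\<alpha> > -1/2" "k \<le> n"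
  shows "(even (n - k) \<longrightarrow> jacobi_cheb_sum \<alpha> \<alpha> n k > 0)
       \<and> (odd (n - k) \<longrightarrow> jacobi_cheb_sum \<alpha> \<alpha> n k = 0)"
proof (rule three_term_backward_parity)
  show "(real n - real j) * (real n + real j + \<alpha> + \<alpha> + 1) * jacobi_cheb_sum \<alpha> \<alpha> n j
      = (real n + real j + 2) * (real n - real j + \<alpha> + \<alpha> - 1) * jacobi_cheb_sum \<alpha> \<alpha> n (Suc (Suc j))" for j
    using jacobi_cheb_sum_three_term[of n j \<alpha> \<alpha>] by simp
  show "(real n - real j) * (real n + real j + \<alpha> + \<alpha> + 1) > 0" if "j < n" for j
    using assms that by (intro jacobi_cheb_three_term_lead_pos) simp_all
  show "(real n + real j + 2) * (real n - real j + \<alpha> + \<alpha> - 1) > 0" if "Suc j < n" for j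
    using assms that by (intro mult_pos_pos) simp_all
  show "jacobi_cheb_sum \<alpha> \<alpha> n n > 0"
    using assms by (intro jacobi_cheb_sum_top_pos) simp
qed (simp_all add: assms jacobi_cheb_sum_eq_0)

lemma jacobi_cheb_sum_chebyshev:
  assumes "k < n"
  shows "jacobi_cheb_sum (-1/2) (-1/2) n k = 0"
proof (rule three_term_backward_zero)
  show "(real n - real j) * (real n + real j + -1/2 + -1/2 + 1) * jacobi_cheb_sum (-1/2) (-1/2) n j
      = (real n + real j + 2) * (real n - real j + -1/2 + -1/2 - 1)
        * jacobi_cheb_sum (-1/2) (-1/2) n (Suc (Suc j))" for j
    using jacobi_cheb_sum_three_term[of n j "-1/2" "-1/2"] by simp
  show "(real n - real j) * (real n + real j + -1/2 + -1/2 + 1) > 0" if "j < n" for j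
    using that by (intro jacobi_cheb_three_term_lead_pos) simp_all
  show "(real n + real j + 2) * (real n - real j + -1/2 + -1/2 - 1) = 0" if "Suc (Suc j) = n" for j
    using that by auto
qed (simp_all add: assms jacobi_cheb_sum_eq_0)

theorem mainTheorem3:
  fixes \<alpha> \<beta> :: real and n k :: nat
  assumes "\<alpha> > -1" and "\<beta> > -1" and "n \<ge> 1" and "k \<le> n"
  shows "(\<alpha> > \<beta> \<and> \<alpha> + \<beta> \<ge> -1 \<longrightarrow> dcoef \<alpha> \<beta> k n > 0)
       \<and> (\<alpha> < \<beta> \<and> \<alpha> + \<beta> \<ge> -1 \<longrightarrow> (-1) ^ (n - k) * dcoef \<alpha> \<beta> k n > 0)
       \<and> (\<alpha> = \<beta> \<and> \<alpha> > -1/2 \<longrightarrow>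
            (even (n - k) \<longrightarrow> dcoef \<alpha> \<beta> k n > 0) \<and>
            (odd (n - k) \<longrightarrow> dcoef \<alpha> \<beta> k n = 0))
       \<and> (\<alpha> = -1/2 \<and> \<beta> = -1/2 \<longrightarrow>
            (k = n \<longrightarrow> dcoef \<alpha> \<beta> k n > 0) \<and>
            (1 \<le> k \<and> k \<le> n - 1 \<longrightarrow> dcoef \<alpha> \<beta> k n = 0))"
  unfolding dcoef_eq_jacobi_cheb_sum[OF assms(4,1)]
  using jacobi_cheb_sum_pos[OF _ _ assms(4)] jacobi_cheb_sum_alternating[OF _ _ assms(4)]
    jacobi_cheb_sum_symmetric[OF _ assms(4)] jacobi_cheb_sum_top_pos[of "-1/2" "-1/2" n]
    jacobi_cheb_sum_chebyshev[of k n] assms(3)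
  by auto

end
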